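(* Let $\mu$ be a differentiable growth rate and $\gamma\in\mathbb R$. If the system $x'=(A(t)-\gamma\frac{\mu'(t)}{\mu(t)}I)x$ admits a nonuniform $\mu$-dichotomy with invariant projections $P(t)$, then $\mathcal U_\gamma=\{(s,\xi):\xi\in\operatorname{Im}P(s)\}$, $\mathcal V_\gamma=\{(s,\xi):\xi\in\operatorname{Ker}P(s)\}$, and $\mathcal U_\gamma\oplus\mathcal V_\gamma=\mathbb R\times\mathbb R^n$.
   Context: Fix $n\ge1$ and a norm on $\mathbb R^n$ with induced operator norm. Let $A:\mathbb R\to M_n(\mathbb R)$ be continuous with evolution operator $\Phi(t,s)$. $\operatorname{sign}(s)\in\{-1,0,1\}$ is the sign of $s$. A growth rate is a strictly increasing $\mu:\mathbb R\to(0,\infty)$, $\mu(0)=1$, $\mu\to+\infty$ at $+\infty$, $\mu\to0$ at $-\infty$; differentiable growth rate if differentiable. A linear system $x'=C(t)x$ with evolution operator $\Psi$ admits a nonuniform $\mu$-dichotomy with invariant projections $P(t)$ if $P(t)$ are projections with $P(t)\Psi(t,s)=\Psi(t,s)P(s)$ for all $t,s$ and there are constants $K\ge1$, $\alpha<0$, $\beta>0$, $\theta,\nu\ge0$, $\alpha+\theta<0$, $\beta-\nu>0$ with ($Q=I-P$) $\|\Psi(t,s)P(s)\|\le K(\mu(t)/\mu(s))^{\alpha}\mu(s)^{\operatorname{sign}(s)\theta}$ for $t\ge s$ and $\|\Psi(t,s)Q(s)\|\le K(\mu(t)/\mu(s))^{\beta}\mu(s)^{\operatorname{sign}(s)\nu}$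 for $t\le s$. $\mathcal U_\gamma=\{(s,\xi):\sup_{t\ge0}\|\Phi(t,s)\xi\|\mu(t)^{-\gamma}<\infty\}$ and $\mathcal V_\gamma=\{(s,\xi):\sup_{t\le0}\|\Phi(t,s)\xi\|\mu(t)^{-\gamma}<\infty\}$ ($\Phi$ is the evolution operator of $x'=A(t)x$). The sum $\mathcal U\oplus\mathcal V$ of subsets of $\mathbb R\times\mathbb R^n$ is taken fiberwise: $\{(s,\xi):\xi\in\mathcal U(s)+\mathcal V(s)\}$ with $\mathcal U(s)\cap\mathcal V(s)=\{0\}$, where $\mathcal U(s)=\{\xi:(s,\xi)\in\mathcal U\}$. *)

theory Defs
  imports "HOL-Analysis.Analysis"
begin

definition is_norm :: "(real^'n \<Rightarrow> real) \<Rightarrow> bool" where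
  "is_norm N \<longleftrightarrow> (\<forall>x. 0 \<le> N x) \<and> (\<forall>x. N x = 0 \<longleftrightarrow> x = 0)
     \<and> (\<forall>c x. N (c *\<^sub>R x) = \<bar>c\<bar> * N x) \<and> (\<forall>x y. N (x + y) \<le> N x + N y)"

definition op_norm :: "(real^'n \<Rightarrow> real) \<Rightarrow> real^'n^'n \<Rightarrow> real" where
  "op_norm N M = (SUP x\<in>{x. N x = 1}. N (M *v x))"

definition growth_rate :: "(real \<Rightarrow> real) \<Rightarrow> bool" where
  "growth_rate \<mu> \<longleftrightarrow> strict_mono \<mu> \<and> (\<forall>t. 0 < \<mu> t) \<and> \<mu> 0 = 1
     \<and> filterlim \<mu> at_top at_top \<and> (\<mu> \<longlongrightarrow> 0) at_bot"

definition diff_growth_rate :: "(real \<Rightarrow> real) \<Rightarrow> bool" where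
  "diff_growth_rate \<mu> \<longleftrightarrow> growth_rate \<mu> \<and> (\<forall>t. \<mu> differentiable (at t))"

definition evolution_operator :: "(real \<Rightarrow> real^'n^'n) \<Rightarrow> (real \<Rightarrow> real \<Rightarrow> real^'n^'n) \<Rightarrow> bool" where
  "evolution_operator A \<Phi> \<longleftrightarrow> (\<forall>s. \<Phi> s s = mat 1)
     \<and> (\<forall>t s. ((\<lambda>\<tau>. \<Phi> \<tau> s) has_vector_derivative (A t ** \<Phi> t s)) (at t))"

definition mu_dichotomy :: "(real^'n \<Rightarrow> real) \<Rightarrow> (real \<Rightarrow> real) \<Rightarrow> (real \<Rightarrow> real \<Rightarrow> real^'n^'n)
    \<Rightarrow> (real \<Rightarrow> real^'n^'n) \<Rightarrow> bool" where
  "mu_dichotomy N \<mu> \<Psi> P \<longleftrightarrow>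
     (\<forall>t. P t ** P t = P t) \<and> (\<forall>t s. P t ** \<Psi> t s = \<Psi> t s ** P s) \<and>
     (\<exists>K \<alpha> \<beta> \<theta> \<nu>. K \<ge> 1 \<and> \<alpha> < 0 \<and> \<beta> > 0 \<and> \<theta> \<ge> 0 \<and> \<nu> \<ge> 0 \<and> \<alpha> + \<theta> < 0 \<and> \<beta> - \<nu> > 0 \<and>
        (\<forall>t s. t \<ge> s \<longrightarrow> op_norm N (\<Psi> t s ** P s)
            \<le> K * (\<mu> t / \<mu> s) powr \<alpha> * \<mu> s powr (sgn s * \<theta>)) \<and>
        (\<forall>t s. t \<le> s \<longrightarrow> op_norm N (\<Psi> t s ** (mat 1 - P s))
            \<le> K * (\<mu> t / \<mu> s) powr \<beta> * \<mu> s powr (sgn s * \<nu>)))"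

definition U_set :: "(real^'n \<Rightarrow> real) \<Rightarrow> (real \<Rightarrow> real) \<Rightarrow> (real \<Rightarrow> real \<Rightarrow> real^'n^'n) \<Rightarrow> real
    \<Rightarrow> (real \<times> (real^'n)) set" where
  "U_set N \<mu> \<Phi> \<gamma> = {(s, \<xi>). \<exists>C. \<forall>t\<ge>0. N (\<Phi> t s *v \<xi>) * \<mu> t powr (-\<gamma>) \<le> C}"

definition V_set :: "(real^'n \<Rightarrow> real) \<Rightarrow> (real \<Rightarrow> real) \<Rightarrow> (real \<Rightarrow> real \<Rightarrow> real^'n^'n) \<Rightarrow> real
    \<Rightarrow> (real \<times> (real^'n)) set" where
  "V_set N \<mu> \<Phi> \<gamma> = {(s, \<xi>). \<exists>C. \<forall>t\<le>0. N (\<Phi> t s *v \<xi>) * \<mu> t powr (-\<gamma>) \<le> C}"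

definition fiber :: "(real \<times> 'a) set \<Rightarrow> real \<Rightarrow> 'a set" where
  "fiber U s = {\<xi>. (s, \<xi>) \<in> U}"

definition fib_dsum :: "(real \<times> 'a::ab_group_add) set \<Rightarrow> (real \<times> 'a) set \<Rightarrow> (real \<times> 'a) set" where
  "fib_dsum U V = {(s, \<xi>). \<xi> \<in> {u + v | u v. u \<in> fiber U s \<and> v \<in> fiber V s}
                          \<and> fiber U s \<inter> fiber V s = {0}}"

end

theory Submission
  imports Defs
begin

text \<open>The rescaled system has evolution operator \<open>\<Psi>(t,s) = (\<mu>(s)/\<mu>(t))\<^sup>\<gamma> \<Phi>(t,s)\<close>, so
  \<open>(s,\<xi>) \<in> \<U>\<^sub>\<gamma>\<close> (resp. \<open>\<V>\<^sub>\<gamma>\<close>) means that the \<open>\<Psi>\<close>-orbit of \<open>\<xi>\<close> is bounded on \<open>[0,\<infinity>)\<close>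
  (resp. \<open>(-\<infinity>,0]\<close>). Orbits starting in \<open>Im P(s)\<close> are bounded forward by the stable estimate,
  applied from time \<open>0\<close>. Conversely, if the orbit of \<open>\<xi>\<close> is bounded forward by \<open>C\<close>, then so is
  that of its unstable part \<open>\<eta> = (I - P(s))\<xi>\<close>, and pulling \<open>\<eta>\<close> back from time \<open>t\<close> with the
  unstable estimate gives \<open>N \<eta> \<le> K C \<mu>(s) powr \<beta> * \<mu>(t) powr (\<nu> - \<beta>) \<rightarrow> 0\<close>. The backward half is symmetric, and
  \<open>Im P(s) \<oplus> Ker P(s)\<close> is the whole space because \<open>P(s)\<close> is a projection.\<close>

lemma is_norm_nonneg: "is_norm N \<Longrightarrow> 0 \<le> N x"
  and is_norm_eq_0_iff: "is_norm N \<Longrightarrow> N x = 0 \<longleftrightarrow> x = 0"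
  and is_norm_scaleR: "is_norm N \<Longrightarrow> N (c *\<^sub>R x) = \<bar>c\<bar> * N x"
  and is_norm_triangle: "is_norm N \<Longrightarrow> N (x + y) \<le> N x + N y"
  by (simp_all add: is_norm_def)

lemma is_norm_zero: "is_norm N \<Longrightarrow> N 0 = 0"
  by (simp add: is_norm_eq_0_iff)

lemma is_norm_minus_commute: "is_norm N \<Longrightarrow> N (x - y) = N (y - x)"
  using is_norm_scaleR[of N "-1" "y - x"] by simp

lemma is_norm_diff_le: "is_norm N \<Longrightarrow> N (x - y) \<le> N x + N y"
  using is_norm_triangle[of N x "-y"] is_norm_scaleR[of N "-1" y] by simp

lemma is_norm_sum_le:
  assumes "is_norm N" and "finite S"
  shows "N (\<Sum>i\<in>S. f i) \<le> (\<Sum>i\<in>S. N (f i))"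
  using \<open>finite S\<close>
proof (induction S rule: finite_induct)
  case empty
  then show ?case by (simp add: is_norm_zero[OF assms(1)])
next
  case (insert a S)
  then show ?case using is_norm_triangle[OF assms(1), of "f a" "sum f S"] by simp
qed

lemma is_norm_le_norm:
  fixes N :: "real^'n \<Rightarrow> real"
  assumes N: "is_norm N"
  shows "\<exists>C>0. \<forall>x. N x \<le> C * norm x"
proof -
  define C where "C = 1 + (\<Sum>b\<in>Basis. N (b::real^'n))"
  have "C > 0"
    unfolding C_def using is_norm_nonneg[OF N] by (simp add: add_pos_nonneg sum_nonneg)
  moreover have "N x \<le> C * norm x" for x
  proof -
    have "N x = N (\<Sum>b\<in>Basis. (x \<bullet> b) *\<^sub>R b)" by (simp add: euclidean_representation)
    also have "\<dots> \<le> (\<Sum>b\<in>Basis. N ((x \<bullet> b) *\<^sub>R b))" by (rule is_norm_sum_le[OF N]) simp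
    also have "\<dots> = (\<Sum>b\<in>Basis. \<bar>x \<bullet> b\<bar> * N b)" by (simp add: is_norm_scaleR[OF N])
    also have "\<dots> \<le> (\<Sum>b\<in>Basis. norm x * N b)"
      by (rule sum_mono) (simp add: Basis_le_norm is_norm_nonneg[OF N] mult_right_mono)
    also have "\<dots> \<le> C * norm x"
      unfolding C_def by (simp add: sum_distrib_left[symmetric] distrib_right)
    finally show ?thesis .
  qed
  ultimately show ?thesis by blast
qed

lemma is_norm_continuous:
  fixes N :: "real^'n \<Rightarrow> real"
  assumes N: "is_norm N"
  shows "continuous_on UNIV N"
proof -
  obtain C where C: "C > 0" "\<And>x. N x \<le> C * norm x" using is_norm_le_norm[OF N] by blast
  have "dist (N x) (N y) \<le> C * dist x y" for x y
    using is_norm_triangle[OF N, of "x - y" y] is_norm_triangle[OF N, of "y - x" x]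
      is_norm_minus_commute[OF N, of x y] C(2)[of "x - y"]
    by (simp add: dist_real_def dist_norm abs_le_iff)
  with C(1) show ?thesis
    by (intro lipschitz_on_continuous_on[of C] lipschitz_onI) auto
qed

lemma is_norm_ge_norm:
  fixes N :: "real^'n \<Rightarrow> real"
  assumes N: "is_norm N"
  shows "\<exists>c>0. \<forall>x. c * norm x \<le> N x"
proof -
  obtain b :: "real^'n" where b: "b \<in> Basis" using nonempty_Basis by blast
  have "sphere (0::real^'n) 1 \<noteq> {}" using b by (auto intro!: exI[of _ b])
  then obtain x0 where x0: "x0 \<in> sphere 0 1" "\<And>y. y \<in> sphere 0 1 \<Longrightarrow> N x0 \<le> N y"
    using continuous_attains_inf[OF compact_sphere _ continuous_on_subset[OF is_norm_continuous[OF N]]]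
    by blast
  have "N x0 > 0"
    using x0(1) is_norm_nonneg[OF N, of x0] is_norm_eq_0_iff[OF N, of x0] by auto
  moreover have "N x0 * norm x \<le> N x" for x
  proof (cases "x = 0")
    case False
    have "N x0 \<le> N ((1 / norm x) *\<^sub>R x)" using x0(2) False by simp
    also have "\<dots> = N x / norm x" by (simp add: is_norm_scaleR[OF N])
    finally show ?thesis using False by (simp add: field_simps)
  qed (simp add: is_norm_zero[OF N])
  ultimately show ?thesis by blast
qed

lemma op_norm_apply_le:
  fixes N :: "real^'n \<Rightarrow> real"
  assumes N: "is_norm N"
  shows "N (M *v x) \<le> op_norm N M * N x"
proof (cases "x = 0")
  case False
  obtain C where C: "C > 0" "\<And>x. N x \<le> C * norm x" using is_norm_le_norm[OF N] by blast
  obtain c where c: "c > 0" "\<And>x. c * norm x \<le> N x" using is_norm_ge_norm[OF N] by blast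
  obtain K where K: "K \<ge> 0" "\<And>x. norm (M *v x) \<le> norm x * K"
    using bounded_linear.nonneg_bounded[OF matrix_vector_mul_bounded_linear[of M]] by blast
  have bdd: "bdd_above ((\<lambda>y. N (M *v y)) ` {y. N y = 1})"
  proof (rule bdd_aboveI2)
    fix y assume "y \<in> {y. N y = 1}"
    then have "norm y \<le> 1 / c" using c(2)[of y] c(1) by (simp add: field_simps)
    then have "norm (M *v y) \<le> K / c" using K(2)[of y] mult_right_mono[OF _ K(1)] by fastforce
    then show "N (M *v y) \<le> C * (K / c)"
      using C(2)[of "M *v y"] mult_left_mono[of "norm (M *v y)" "K / c" C] C(1) by linarith
  qed
  have Nx: "N x > 0" using False is_norm_nonneg[OF N, of x] is_norm_eq_0_iff[OF N, of x] by auto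
  have "N (M *v x) / N x = N (M *v ((1 / N x) *\<^sub>R x))"
    using Nx by (simp add: matrix_vector_mult_scaleR is_norm_scaleR[OF N])
  also have "\<dots> \<le> op_norm N M"
    unfolding op_norm_def using Nx by (intro cSUP_upper[OF _ bdd]) (simp add: is_norm_scaleR[OF N])
  finally show ?thesis using Nx by (simp add: field_simps)
qed (simp add: is_norm_zero[OF N])

lemma is_norm_eq_0_if_eventually_le_null:
  assumes N: "is_norm N" and F: "F \<noteq> bot"
    and g: "(g \<longlongrightarrow> 0) F" and le: "eventually (\<lambda>t. N x \<le> g t) F"
  shows "x = 0"
proof -
  have "N x \<le> 0" using tendsto_le[OF F g tendsto_const le] .
  then show ?thesis using is_norm_nonneg[OF N, of x] is_norm_eq_0_iff[OF N, of x] by simp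
qed

lemma norm_matrix_vector_mult_le:
  fixes M :: "real^'n^'m"
  shows "norm (M *v y) \<le> real CARD('m) * real CARD('n) * norm M * norm y"
proof -
  have "\<bar>M $ i $ j\<bar> \<le> norm M" for i j
    using component_le_norm_cart[of "M $ i" j] Finite_Cartesian_Product.norm_nth_le[of M i] by linarith
  then have "onorm ((*v) M) \<le> real CARD('m) * real CARD('n) * norm M"
    by (rule onorm_le_matrix_component)
  moreover have "norm (M *v y) \<le> onorm ((*v) M) * norm y"
    by (rule onorm) simp
  ultimately show ?thesis by (meson mult_right_mono norm_ge_zero order_trans)
qed

lemma has_real_derivative_exp_weighted_inner_self:
  assumes "(x has_vector_derivative v) (at t)"
  shows "((\<lambda>\<tau>. exp (c * \<tau>) * (x \<tau> \<bullet> x \<tau>)) has_real_derivative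
           exp (c * t) * (2 * (x t \<bullet> v) + c * (x t \<bullet> x t))) (at t)"
proof -
  have dx: "(x has_derivative (\<lambda>h. h *\<^sub>R v)) (at t)"
    using assms by (simp add: has_vector_derivative_def)
  have "((\<lambda>\<tau>. x \<tau> \<bullet> x \<tau>) has_real_derivative 2 * (x t \<bullet> v)) (at t)"
    using has_derivative_inner[OF dx dx]
    by (rule has_derivative_imp_has_field_derivative) (simp add: inner_commute algebra_simps)
  then show ?thesis
    by (auto intro!: derivative_eq_intros simp: algebra_simps)
qed

text \<open>Uniqueness for linear systems: \<open>exp (\<mp>2 L \<tau>) * \<bar>x \<tau>\<bar>\<^sup>2\<close> is monotone on the segment
  between \<open>s\<close> and \<open>t\<close>, where \<open>L\<close> bounds \<open>A\<close> there.\<close>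
lemma linear_ode_zero:
  fixes A :: "real \<Rightarrow> real^'n^'n" and x :: "real \<Rightarrow> real^'n"
  assumes cA: "continuous_on UNIV A"
    and x': "\<And>t. (x has_vector_derivative (A t *v x t)) (at t)"
    and x0: "x s = 0"
  shows "x t = 0"
proof -
  let ?S = "closed_segment s t"
  have "compact (A ` ?S)"
    by (rule compact_continuous_image[OF continuous_on_subset[OF cA]]) auto
  then obtain B where B: "\<And>\<tau>. \<tau> \<in> ?S \<Longrightarrow> norm (A \<tau>) \<le> B" "B > 0"
    using compact_imp_bounded bounded_pos by (metis imageI)
  define L where "L = real CARD('n) * real CARD('n) * B"
  have energy: "\<bar>x \<tau> \<bullet> (A \<tau> *v x \<tau>)\<bar> \<le> L * (x \<tau> \<bullet> x \<tau>)" if "\<tau> \<in> ?S" for \<tau>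
  proof -
    have "real CARD('n) * real CARD('n) * norm (A \<tau>) \<le> L"
      unfolding L_def using B(1)[OF that] by (intro mult_left_mono) auto
    then have "norm (A \<tau> *v x \<tau>) \<le> L * norm (x \<tau>)"
      using norm_matrix_vector_mult_le[of "A \<tau>" "x \<tau>"] by (meson mult_right_mono norm_ge_zero order_trans)
    then have "\<bar>x \<tau> \<bullet> (A \<tau> *v x \<tau>)\<bar> \<le> norm (x \<tau>) * (L * norm (x \<tau>))"
      using Cauchy_Schwarz_ineq2[of "x \<tau>" "A \<tau> *v x \<tau>"] by (meson mult_left_mono norm_ge_zero order_trans)
    also have "\<dots> = L * (x \<tau> \<bullet> x \<tau>)"
      by (simp add: power2_norm_eq_inner[symmetric] power2_eq_square)
    finally show ?thesis .
  qed
  have "exp (c * t) * (x t \<bullet> x t) \<le> 0" if "c = - 2 * L \<and> s \<le> t \<or> c = 2 * L \<and> t \<le> s" for c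
  proof -
    define h where "h \<tau> = exp (c * \<tau>) * (x \<tau> \<bullet> x \<tau>)" for \<tau>
    have h': "(h has_real_derivative exp (c * \<tau>) * (2 * (x \<tau> \<bullet> (A \<tau> *v x \<tau>)) + c * (x \<tau> \<bullet> x \<tau>))) (at \<tau>)"
      for \<tau> unfolding h_def by (rule has_real_derivative_exp_weighted_inner_self[OF x'])
    have "h t \<le> h s"
      using that
    proof (elim disjE conjE)
      assume c: "c = - 2 * L" and st: "s \<le> t"
      show ?thesis
      proof (rule DERIV_nonpos_imp_nonincreasing[OF st])
        fix \<tau> assume "s \<le> \<tau>" "\<tau> \<le> t"
        then have "\<tau> \<in> ?S" by (simp add: closed_segment_eq_real_ivl st)
        then have "2 * (x \<tau> \<bullet> (A \<tau> *v x \<tau>)) + c * (x \<tau> \<bullet> x \<tau>) \<le> 0"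
          using energy[of \<tau>] c by (simp add: abs_le_iff)
        then show "\<exists>y. (h has_real_derivative y) (at \<tau>) \<and> y \<le> 0"
          using h' by (blast intro: mult_nonneg_nonpos less_imp_le[OF exp_gt_zero])
      qed
    next
      assume c: "c = 2 * L" and ts: "t \<le> s"
      show ?thesis
      proof (rule DERIV_nonneg_imp_nondecreasing[OF ts])
        fix \<tau> assume "t \<le> \<tau>" "\<tau> \<le> s"
        then have "\<tau> \<in> ?S" by (simp add: closed_segment_eq_real_ivl ts)
        then have "0 \<le> 2 * (x \<tau> \<bullet> (A \<tau> *v x \<tau>)) + c * (x \<tau> \<bullet> x \<tau>)"
          using energy[of \<tau>] c by (simp add: abs_le_iff)
        then show "\<exists>y. (h has_real_derivative y) (at \<tau>) \<and> y \<ge> 0"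
          using h' by (blast intro: mult_nonneg_nonneg less_imp_le[OF exp_gt_zero])
      qed
    qed
    then show ?thesis by (simp add: h_def x0)
  qed
  then have "x t \<bullet> x t \<le> 0"
    by (metis exp_gt_zero linorder_le_cases mult_le_0_iff not_le)
  then show ?thesis by (metis inner_eq_zero_iff inner_ge_zero order_antisym)
qed

lemma evolution_operator_apply_has_vector_derivative:
  fixes A :: "real \<Rightarrow> real^'n^'n"
  assumes "evolution_operator A \<Phi>"
  shows "((\<lambda>\<tau>. \<Phi> \<tau> s *v v) has_vector_derivative A t *v (\<Phi> t s *v v)) (at t)"
proof -
  have "linear (\<lambda>M::real^'n^'n. M *v v)"
    by (rule linearI) (simp_all add: matrix_vector_mult_add_rdistrib scaleR_matrix_vector_assoc)
  then have "bounded_linear (\<lambda>M::real^'n^'n. M *v v)"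
    by (simp add: linear_conv_bounded_linear)
  moreover have "((\<lambda>\<tau>. \<Phi> \<tau> s) has_vector_derivative (A t ** \<Phi> t s)) (at t)"
    using assms by (simp add: evolution_operator_def)
  ultimately have "((\<lambda>\<tau>. \<Phi> \<tau> s *v v) has_vector_derivative (A t ** \<Phi> t s) *v v) (at t)"
    by (rule bounded_linear.has_vector_derivative)
  then show ?thesis by (simp add: matrix_vector_mul_assoc)
qed

lemma evolution_operator_cocycle:
  assumes cA: "continuous_on UNIV A" and E: "evolution_operator A \<Phi>"
  shows "\<Phi> t s = \<Phi> t r ** \<Phi> r s"
proof -
  have "\<Phi> t s *v v = (\<Phi> t r ** \<Phi> r s) *v v" for v
  proof -
    define x where "x \<tau> = \<Phi> \<tau> s *v v - \<Phi> \<tau> r *v (\<Phi> r s *v v)" for \<tau>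
    have "x t = 0"
    proof (rule linear_ode_zero[OF cA, of x r])
      show "(x has_vector_derivative A \<tau> *v x \<tau>) (at \<tau>)" for \<tau>
        unfolding x_def
        using has_vector_derivative_diff[OF evolution_operator_apply_has_vector_derivative[OF E]
            evolution_operator_apply_has_vector_derivative[OF E]]
        by (simp add: matrix_vector_mult_diff_distrib)
      show "x r = 0" using E by (simp add: x_def evolution_operator_def)
    qed
    then show ?thesis by (simp add: x_def matrix_vector_mul_assoc)
  qed
  then show ?thesis by (simp add: matrix_eq)
qed

lemma evolution_operator_rescale:
  fixes \<rho> c :: "real \<Rightarrow> real"
  assumes cA: "continuous_on UNIV A" and E: "evolution_operator A \<Phi>"
    and \<rho>: "\<And>t. \<rho> t \<noteq> 0" "\<And>t. (\<rho> has_real_derivative c t * \<rho> t) (at t)"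
    and E': "evolution_operator (\<lambda>t. A t - c t *\<^sub>R mat 1) \<Psi>"
  shows "\<Psi> t s = (\<rho> s / \<rho> t) *\<^sub>R \<Phi> t s"
proof -
  have "\<Psi> t s *v v = ((\<rho> s / \<rho> t) *\<^sub>R \<Phi> t s) *v v" for v
  proof -
    define x where "x \<tau> = \<rho> \<tau> *\<^sub>R (\<Psi> \<tau> s *v v) - \<rho> s *\<^sub>R (\<Phi> \<tau> s *v v)" for \<tau>
    have "x t = 0"
    proof (rule linear_ode_zero[OF cA, of x s])
      fix \<tau>
      have "(x has_vector_derivative
          (c \<tau> * \<rho> \<tau>) *\<^sub>R (\<Psi> \<tau> s *v v)
          + \<rho> \<tau> *\<^sub>R ((A \<tau> - c \<tau> *\<^sub>R mat 1) *v (\<Psi> \<tau> s *v v))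
          - \<rho> s *\<^sub>R (A \<tau> *v (\<Phi> \<tau> s *v v))) (at \<tau>)"
        using \<rho>(2)[of \<tau>] evolution_operator_apply_has_vector_derivative[OF E', of s v \<tau>]
          evolution_operator_apply_has_vector_derivative[OF E, of s v \<tau>]
        unfolding x_def
        by (auto intro!: derivative_eq_intros has_vector_derivative_scaleR simp: algebra_simps)
      also have "(c \<tau> * \<rho> \<tau>) *\<^sub>R (\<Psi> \<tau> s *v v)
          + \<rho> \<tau> *\<^sub>R ((A \<tau> - c \<tau> *\<^sub>R mat 1) *v (\<Psi> \<tau> s *v v))
          - \<rho> s *\<^sub>R (A \<tau> *v (\<Phi> \<tau> s *v v)) = A \<tau> *v x \<tau>"
        by (simp add: x_def matrix_vector_mult_diff_rdistrib matrix_vector_mult_diff_distrib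
            scaleR_matrix_vector_assoc[symmetric] algebra_simps)
      finally show "(x has_vector_derivative A \<tau> *v x \<tau>) (at \<tau>)" .
      show "x s = 0" using E E' by (simp add: x_def evolution_operator_def)
    qed
    then have "\<rho> t *\<^sub>R (\<Psi> t s *v v) = \<rho> s *\<^sub>R (\<Phi> t s *v v)" by (simp add: x_def)
    then have "(1 / \<rho> t) *\<^sub>R (\<rho> t *\<^sub>R (\<Psi> t s *v v)) = (\<rho> s / \<rho> t) *\<^sub>R (\<Phi> t s *v v)"
      by simp
    then show ?thesis using \<rho>(1)[of t] by (simp add: scaleR_matrix_vector_assoc)
  qed
  then show ?thesis by (simp add: matrix_eq)
qed

lemma has_real_derivative_powr_log_deriv:
  fixes \<mu> :: "real \<Rightarrow> real"
  assumes "\<mu> t > 0" and "(\<mu> has_real_derivative d) (at t)"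
  shows "((\<lambda>t. \<mu> t powr \<gamma>) has_real_derivative (\<gamma> * d / \<mu> t) * \<mu> t powr \<gamma>) (at t)"
proof -
  have "\<mu> t powr (\<gamma> - 1) = \<mu> t powr \<gamma> / \<mu> t"
    using assms(1) by (simp add: powr_diff)
  then show ?thesis
    using DERIV_fun_powr[OF assms(2,1), of \<gamma>] by (simp add: field_simps)
qed

lemma rescaled_cocycle:
  fixes \<Phi> \<Psi> :: "real \<Rightarrow> real \<Rightarrow> real^'n^'n"
  assumes "\<And>t s. \<Psi> t s = (\<rho> s / \<rho> t) *\<^sub>R \<Phi> t s"
    and "\<And>t. \<rho> t \<noteq> 0"
    and "\<And>t r s. \<Phi> t s = \<Phi> t r ** \<Phi> r s"
  shows "\<Psi> t s = \<Psi> t r ** \<Psi> r s"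
proof -
  have "(a *\<^sub>R X) ** (b *\<^sub>R Y) = (a * b) *\<^sub>R (X ** Y)" for a b and X Y :: "real^'n^'n"
    by (simp add: matrix_matrix_mult_def vec_eq_iff sum_distrib_left mult_ac)
  then have "\<Psi> t r ** \<Psi> r s = ((\<rho> r / \<rho> t) * (\<rho> s / \<rho> r)) *\<^sub>R (\<Phi> t r ** \<Phi> r s)"
    by (simp add: assms(1))
  also have "\<dots> = \<Psi> t s"
    using assms(2)[of r] by (simp add: assms(1) assms(3)[of t s r, symmetric])
  finally show ?thesis ..
qed

definition bounded_orbit ::
    "(real^'n \<Rightarrow> real) \<Rightarrow> (real \<Rightarrow> real \<Rightarrow> real^'n^'n) \<Rightarrow> real set \<Rightarrow> real \<Rightarrow> real^'n \<Rightarrow> bool" where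
  "bounded_orbit N \<Psi> T s \<xi> \<longleftrightarrow> (\<exists>C. \<forall>t\<in>T. N (\<Psi> t s *v \<xi>) \<le> C)"

lemma bounded_orbit_diff:
  assumes N: "is_norm N" and "bounded_orbit N \<Psi> T s \<xi>" and "bounded_orbit N \<Psi> T s \<eta>"
  shows "bounded_orbit N \<Psi> T s (\<xi> - \<eta>)"
proof -
  obtain C D where C: "\<forall>t\<in>T. N (\<Psi> t s *v \<xi>) \<le> C" and D: "\<forall>t\<in>T. N (\<Psi> t s *v \<eta>) \<le> D"
    using assms(2,3) by (auto simp: bounded_orbit_def)
  have "N (\<Psi> t s *v (\<xi> - \<eta>)) \<le> C + D" if "t \<in> T" for t
  proof -
    have "N (\<Psi> t s *v (\<xi> - \<eta>)) \<le> N (\<Psi> t s *v \<xi>) + N (\<Psi> t s *v \<eta>)"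
      by (simp add: matrix_vector_mult_diff_distrib is_norm_diff_le[OF N])
    then show ?thesis using C D that by fastforce
  qed
  then show ?thesis by (auto simp: bounded_orbit_def)
qed

lemma weighted_bound_iff_bounded_orbit:
  assumes N: "is_norm N" and pos: "\<And>t. \<mu> t > 0"
    and \<Psi>: "\<And>t s. \<Psi> t s = (\<mu> s powr \<gamma> / \<mu> t powr \<gamma>) *\<^sub>R \<Phi> t s"
  shows "(\<exists>C. \<forall>t\<in>T. N (\<Phi> t s *v \<xi>) * \<mu> t powr (-\<gamma>) \<le> C) \<longleftrightarrow> bounded_orbit N \<Psi> T s \<xi>"
proof -
  let ?c = "\<mu> s powr (-\<gamma>)"
  have c: "?c > 0" using pos[of s] by simp
  have weight: "N (\<Phi> t s *v \<xi>) * \<mu> t powr (-\<gamma>) = ?c * N (\<Psi> t s *v \<xi>)" for t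
    using pos[of s] pos[of t]
    by (simp add: \<Psi> scaleR_matrix_vector_assoc[symmetric] is_norm_scaleR[OF N] powr_minus field_simps)
  show ?thesis
  proof
    assume "\<exists>C. \<forall>t\<in>T. N (\<Phi> t s *v \<xi>) * \<mu> t powr (-\<gamma>) \<le> C"
    then obtain C where "\<forall>t\<in>T. ?c * N (\<Psi> t s *v \<xi>) \<le> C" by (auto simp: weight)
    then have "\<forall>t\<in>T. N (\<Psi> t s *v \<xi>) \<le> C / ?c" using c by (simp add: field_simps)
    then show "bounded_orbit N \<Psi> T s \<xi>" by (auto simp: bounded_orbit_def)
  next
    assume "bounded_orbit N \<Psi> T s \<xi>"
    then obtain C where "\<forall>t\<in>T. N (\<Psi> t s *v \<xi>) \<le> C" by (auto simp: bounded_orbit_def)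
    then have "\<forall>t\<in>T. N (\<Phi> t s *v \<xi>) * \<mu> t powr (-\<gamma>) \<le> ?c * C"
      using c by (simp add: weight)
    then show "\<exists>C. \<forall>t\<in>T. N (\<Phi> t s *v \<xi>) * \<mu> t powr (-\<gamma>) \<le> C" by blast
  qed
qed

lemma U_set_eq_bounded_forward:
  assumes "is_norm N" and "\<And>t. \<mu> t > 0"
    and "\<And>t s. \<Psi> t s = (\<mu> s powr \<gamma> / \<mu> t powr \<gamma>) *\<^sub>R \<Phi> t s"
  shows "U_set N \<mu> \<Phi> \<gamma> = {(s, \<xi>). bounded_orbit N \<Psi> {0..} s \<xi>}"
  by (auto simp: U_set_def weighted_bound_iff_bounded_orbit[where \<Psi> = \<Psi> and \<Phi> = \<Phi>, OF assms, symmetric])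

lemma V_set_eq_bounded_backward:
  assumes "is_norm N" and "\<And>t. \<mu> t > 0"
    and "\<And>t s. \<Psi> t s = (\<mu> s powr \<gamma> / \<mu> t powr \<gamma>) *\<^sub>R \<Phi> t s"
  shows "V_set N \<mu> \<Phi> \<gamma> = {(s, \<xi>). bounded_orbit N \<Psi> {..0} s \<xi>}"
  by (auto simp: V_set_def weighted_bound_iff_bounded_orbit[where \<Psi> = \<Psi> and \<Phi> = \<Phi>, OF assms, symmetric])

lemma fib_dsum_range_kernel:
  fixes P :: "real \<Rightarrow> 'a::comm_ring_1^'n^'n"
  assumes idem: "\<And>s. P s ** P s = P s"
  shows "fib_dsum {(s, \<xi>). \<xi> \<in> range (\<lambda>x. P s *v x)} {(s, \<xi>). P s *v \<xi> = 0} = UNIV"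
    (is "fib_dsum ?U ?V = _")
proof -
  have P: "P s *v (P s *v x) = P s *v x" for s x by (simp add: matrix_vector_mul_assoc idem)
  have "(s, \<xi>) \<in> fib_dsum ?U ?V" for s \<xi>
  proof -
    have "P s *v \<xi> \<in> fiber ?U s" "\<xi> - P s *v \<xi> \<in> fiber ?V s"
      by (simp_all add: fiber_def matrix_vector_mult_diff_distrib P)
    moreover have "\<xi> = P s *v \<xi> + (\<xi> - P s *v \<xi>)" by simp
    ultimately have "\<xi> \<in> {u + v |u v. u \<in> fiber ?U s \<and> v \<in> fiber ?V s}" by blast
    moreover have "fiber ?U s \<inter> fiber ?V s = {0}"
      using P by (auto simp: fiber_def intro: range_eqI[of _ _ 0])
    ultimately show ?thesis by (simp add: fib_dsum_def)
  qed
  then show ?thesis by auto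
qed

text \<open>A \<open>\<mu>\<close>-dichotomy with fixed constants, keeping only the conditions on the constants
  that the argument uses.\<close>
locale mu_dichotomic =
  fixes N :: "real^'n \<Rightarrow> real" and \<mu> :: "real \<Rightarrow> real"
    and \<Psi> :: "real \<Rightarrow> real \<Rightarrow> real^'n^'n" and P :: "real \<Rightarrow> real^'n^'n"
    and K \<alpha> \<beta> \<theta> \<nu> :: real
  assumes norm: "is_norm N" and growth: "growth_rate \<mu>"
    and cocycle: "\<And>t r s. \<Psi> t s = \<Psi> t r ** \<Psi> r s" and identity: "\<And>s. \<Psi> s s = mat 1"
    and idempotent: "\<And>t. P t ** P t = P t"
    and invariant: "\<And>t s. P t ** \<Psi> t s = \<Psi> t s ** P s"
    and K_nonneg: "0 \<le> K" and \<alpha>_nonpos: "\<alpha> \<le> 0" and \<beta>_nonneg: "0 \<le> \<beta>"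
    and stable_rate: "\<alpha> + \<theta> < 0" and unstable_rate: "\<nu> < \<beta>"
    and stable_bound: "\<And>t s. s \<le> t \<Longrightarrow>
      op_norm N (\<Psi> t s ** P s) \<le> K * (\<mu> t / \<mu> s) powr \<alpha> * \<mu> s powr (sgn s * \<theta>)"
    and unstable_bound: "\<And>t s. t \<le> s \<Longrightarrow>
      op_norm N (\<Psi> t s ** (mat 1 - P s)) \<le> K * (\<mu> t / \<mu> s) powr \<beta> * \<mu> s powr (sgn s * \<nu>)"
begin

lemma mu_pos: "\<mu> t > 0"
  using growth by (simp add: growth_rate_def)

lemma mu_mono: "s \<le> t \<Longrightarrow> \<mu> s \<le> \<mu> t"
  using growth by (simp add: growth_rate_def strict_mono_less_eq)

lemma mu_0: "\<mu> 0 = 1"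
  using growth by (simp add: growth_rate_def)

lemma invariant_apply: "P t *v (\<Psi> t s *v x) = \<Psi> t s *v (P s *v x)"
  by (simp add: matrix_vector_mul_assoc invariant)

lemma idempotent_apply: "P t *v (P t *v x) = P t *v x"
  by (simp add: matrix_vector_mul_assoc idempotent)

lemma complement_invariant: "(mat 1 - P t) ** \<Psi> t s = \<Psi> t s ** (mat 1 - P s)"
  by (simp add: matrix_eq matrix_vector_mul_assoc[symmetric] matrix_vector_mult_diff_rdistrib
      matrix_vector_mult_diff_distrib invariant_apply)

text \<open>Factoring through time \<open>0\<close> bounds the whole forward stable orbit, including the times
  between \<open>0\<close> and \<open>s\<close>.\<close>
lemma stable_bounded_forward: "bounded_orbit N \<Psi> {0..} s (P s *v \<xi>)"
proof -
  have "N (\<Psi> t s *v (P s *v \<xi>)) \<le> K * N (\<Psi> 0 s *v \<xi>)" if "0 \<le> t" for t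
  proof -
    have "\<Psi> t s *v (P s *v \<xi>) = (\<Psi> t 0 ** P 0) *v (\<Psi> 0 s *v \<xi>)"
      by (metis cocycle invariant matrix_mul_assoc matrix_vector_mul_assoc)
    then have "N (\<Psi> t s *v (P s *v \<xi>)) \<le> op_norm N (\<Psi> t 0 ** P 0) * N (\<Psi> 0 s *v \<xi>)"
      using op_norm_apply_le[OF norm] by simp
    moreover have "op_norm N (\<Psi> t 0 ** P 0) \<le> K"
    proof -
      have "\<mu> t powr \<alpha> \<le> \<mu> t powr 0"
        using mu_mono[OF that] mu_0 \<alpha>_nonpos by (intro powr_mono) auto
      then have "\<mu> t powr \<alpha> \<le> 1" using mu_pos[of t] by simp
      then show ?thesis
        using stable_bound[OF that] mult_left_mono[OF _ K_nonneg, of "\<mu> t powr \<alpha>" 1]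
        by (simp add: mu_0)
    qed
    ultimately show ?thesis
      using is_norm_nonneg[OF norm] by (meson mult_right_mono order_trans)
  qed
  then show ?thesis by (auto simp: bounded_orbit_def)
qed

lemma unstable_bounded_backward: "bounded_orbit N \<Psi> {..0} s ((mat 1 - P s) *v \<xi>)"
proof -
  have "N (\<Psi> t s *v ((mat 1 - P s) *v \<xi>)) \<le> K * N (\<Psi> 0 s *v \<xi>)" if "t \<le> 0" for t
  proof -
    have "\<Psi> t s *v ((mat 1 - P s) *v \<xi>) = (\<Psi> t 0 ** (mat 1 - P 0)) *v (\<Psi> 0 s *v \<xi>)"
      by (metis cocycle complement_invariant matrix_mul_assoc matrix_vector_mul_assoc)
    then have "N (\<Psi> t s *v ((mat 1 - P s) *v \<xi>))
        \<le> op_norm N (\<Psi> t 0 ** (mat 1 - P 0)) * N (\<Psi> 0 s *v \<xi>)"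
      using op_norm_apply_le[OF norm] by simp
    moreover have "op_norm N (\<Psi> t 0 ** (mat 1 - P 0)) \<le> K"
    proof -
      have "\<mu> t powr \<beta> \<le> 1"
        using mu_mono[OF that] mu_0 mu_pos[of t] \<beta>_nonneg by (intro powr_le1) auto
      then show ?thesis
        using unstable_bound[OF that] mult_left_mono[OF _ K_nonneg, of "\<mu> t powr \<beta>" 1]
        by (simp add: mu_0)
    qed
    ultimately show ?thesis
      using is_norm_nonneg[OF norm] by (meson mult_right_mono order_trans)
  qed
  then show ?thesis by (auto simp: bounded_orbit_def)
qed

lemma evolution_inverse: "\<Psi> s t ** \<Psi> t s = mat 1"
  using cocycle[of s s t] identity[of s] by simp

lemma unstable_pullback_le:
  assumes "s \<le> t"
  shows "N ((mat 1 - P s) *v \<xi>)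
    \<le> K * (\<mu> s / \<mu> t) powr \<beta> * \<mu> t powr (sgn t * \<nu>) * N (\<Psi> t s *v ((mat 1 - P s) *v \<xi>))"
proof -
  let ?w = "\<Psi> t s *v ((mat 1 - P s) *v \<xi>)"
  have w: "(mat 1 - P t) *v ?w = ?w"
    by (simp add: matrix_vector_mult_diff_rdistrib matrix_vector_mult_diff_distrib
        invariant_apply idempotent_apply)
  have "(mat 1 - P s) *v \<xi> = \<Psi> s t *v ?w"
    by (simp add: matrix_vector_mul_assoc matrix_mul_assoc evolution_inverse)
  also have "\<dots> = (\<Psi> s t ** (mat 1 - P t)) *v ?w"
    by (simp only: w matrix_vector_mul_assoc[symmetric])
  finally have "N ((mat 1 - P s) *v \<xi>) \<le> op_norm N (\<Psi> s t ** (mat 1 - P t)) * N ?w"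
    by (rule ord_eq_le_trans[OF arg_cong[where f = N] op_norm_apply_le[OF norm]])
  also have "\<dots> \<le> K * (\<mu> s / \<mu> t) powr \<beta> * \<mu> t powr (sgn t * \<nu>) * N ?w"
    by (rule mult_right_mono[OF unstable_bound[OF assms] is_norm_nonneg[OF norm]])
  finally show ?thesis .
qed

lemma stable_pullback_le:
  assumes "t \<le> s"
  shows "N (P s *v \<xi>) \<le> K * (\<mu> s / \<mu> t) powr \<alpha> * \<mu> t powr (sgn t * \<theta>) * N (\<Psi> t s *v (P s *v \<xi>))"
proof -
  let ?w = "\<Psi> t s *v (P s *v \<xi>)"
  have w: "P t *v ?w = ?w"
    by (simp add: invariant_apply idempotent_apply)
  have "P s *v \<xi> = \<Psi> s t *v ?w"
    by (simp add: matrix_vector_mul_assoc matrix_mul_assoc evolution_inverse)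
  also have "\<dots> = (\<Psi> s t ** P t) *v ?w"
    by (simp only: w matrix_vector_mul_assoc[symmetric])
  finally have "N (P s *v \<xi>) \<le> op_norm N (\<Psi> s t ** P t) * N ?w"
    by (rule ord_eq_le_trans[OF arg_cong[where f = N] op_norm_apply_le[OF norm]])
  also have "\<dots> \<le> K * (\<mu> s / \<mu> t) powr \<alpha> * \<mu> t powr (sgn t * \<theta>) * N ?w"
    by (rule mult_right_mono[OF stable_bound[OF assms] is_norm_nonneg[OF norm]])
  finally show ?thesis .
qed

lemma bounded_forward_imp_stable:
  assumes "bounded_orbit N \<Psi> {0..} s \<xi>"
  shows "P s *v \<xi> = \<xi>"
proof -
  define \<eta> where "\<eta> = (mat 1 - P s) *v \<xi>"
  have "bounded_orbit N \<Psi> {0..} s \<eta>"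
    using bounded_orbit_diff[OF norm assms stable_bounded_forward[of s \<xi>]]
    by (simp add: \<eta>_def matrix_vector_mult_diff_rdistrib)
  then obtain C where C: "\<And>t. 0 \<le> t \<Longrightarrow> N (\<Psi> t s *v \<eta>) \<le> C"
    by (auto simp: bounded_orbit_def)
  define g where "g t = K * C * \<mu> s powr \<beta> * \<mu> t powr (\<nu> - \<beta>)" for t
  have "eventually (\<lambda>t. N \<eta> \<le> g t) at_top"
    using eventually_ge_at_top[of "max 1 s"]
  proof eventually_elim
    case (elim t)
    then have "s \<le> t" "0 < t" by auto
    have "N \<eta> \<le> K * (\<mu> s / \<mu> t) powr \<beta> * \<mu> t powr \<nu> * N (\<Psi> t s *v \<eta>)"
      using unstable_pullback_le[OF \<open>s \<le> t\<close>, of \<xi>] \<open>0 < t\<close> by (simp add: \<eta>_def)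
    also have "\<dots> \<le> K * (\<mu> s / \<mu> t) powr \<beta> * \<mu> t powr \<nu> * C"
      using C[of t] \<open>0 < t\<close> K_nonneg by (intro mult_left_mono) auto
    also have "\<dots> = g t"
      using mu_pos[of s] mu_pos[of t] by (simp add: g_def powr_divide powr_diff)
    finally show ?case .
  qed
  moreover have "(g \<longlongrightarrow> 0) at_top"
  proof -
    have "filterlim \<mu> at_top at_top" using growth by (simp add: growth_rate_def)
    then have "((\<lambda>t. \<mu> t powr (\<nu> - \<beta>)) \<longlongrightarrow> 0) at_top"
      using unstable_rate by (intro tendsto_neg_powr) auto
    then show ?thesis unfolding g_def using tendsto_mult_right_zero by blast
  qed
  ultimately have "\<eta> = 0" by (intro is_norm_eq_0_if_eventually_le_null[OF norm]) auto
  then show ?thesis by (simp add: \<eta>_def matrix_vector_mult_diff_rdistrib)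
qed

lemma bounded_backward_imp_unstable:
  assumes "bounded_orbit N \<Psi> {..0} s \<xi>"
  shows "P s *v \<xi> = 0"
proof -
  define \<eta> where "\<eta> = P s *v \<xi>"
  have "bounded_orbit N \<Psi> {..0} s \<eta>"
    using bounded_orbit_diff[OF norm assms unstable_bounded_backward[of s \<xi>]]
    by (simp add: \<eta>_def matrix_vector_mult_diff_rdistrib)
  then obtain C where C: "\<And>t. t \<le> 0 \<Longrightarrow> N (\<Psi> t s *v \<eta>) \<le> C"
    by (auto simp: bounded_orbit_def)
  define g where "g t = K * C * \<mu> s powr \<alpha> * \<mu> t powr (- \<theta> - \<alpha>)" for t
  have "eventually (\<lambda>t. N \<eta> \<le> g t) at_bot"
    using eventually_le_at_bot[of "min (-1) s"]
  proof eventually_elim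
    case (elim t)
    then have "t \<le> s" "t < 0" by auto
    have "N \<eta> \<le> K * (\<mu> s / \<mu> t) powr \<alpha> * \<mu> t powr (- \<theta>) * N (\<Psi> t s *v \<eta>)"
      using stable_pullback_le[OF \<open>t \<le> s\<close>, of \<xi>] \<open>t < 0\<close> by (simp add: \<eta>_def)
    also have "\<dots> \<le> K * (\<mu> s / \<mu> t) powr \<alpha> * \<mu> t powr (- \<theta>) * C"
      using C[of t] \<open>t < 0\<close> K_nonneg by (intro mult_left_mono) auto
    also have "\<dots> = g t"
      using mu_pos[of s] mu_pos[of t] by (simp add: g_def powr_divide powr_diff powr_add)
    finally show ?case .
  qed
  moreover have "(g \<longlongrightarrow> 0) at_bot"
  proof -
    have "(\<mu> \<longlongrightarrow> 0) at_bot" using growth by (simp add: growth_rate_def)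
    then have "((\<lambda>t. \<mu> t powr (- \<theta> - \<alpha>)) \<longlongrightarrow> 0) at_bot"
      using stable_rate mu_pos
      by (intro tendsto_zero_powrI always_eventually allI) (auto intro: less_imp_le)
    then show ?thesis unfolding g_def using tendsto_mult_right_zero by blast
  qed
  ultimately have "\<eta> = 0" by (intro is_norm_eq_0_if_eventually_le_null[OF norm]) auto
  then show ?thesis by (simp add: \<eta>_def)
qed

lemma bounded_forward_iff: "bounded_orbit N \<Psi> {0..} s \<xi> \<longleftrightarrow> \<xi> \<in> range (\<lambda>x. P s *v x)"
  using bounded_forward_imp_stable stable_bounded_forward by (metis rangeE rangeI)

lemma bounded_backward_iff: "bounded_orbit N \<Psi> {..0} s \<xi> \<longleftrightarrow> P s *v \<xi> = 0"
  using bounded_backward_imp_unstable unstable_bounded_backward[of s \<xi>]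
  by (auto simp: matrix_vector_mult_diff_rdistrib)

end

lemma mu_dichotomy_imp_mu_dichotomic:
  assumes "is_norm N" and "growth_rate \<mu>"
    and "\<And>t r s. \<Psi> t s = \<Psi> t r ** \<Psi> r s" and "\<And>s. \<Psi> s s = mat 1"
    and "mu_dichotomy N \<mu> \<Psi> P"
  shows "\<exists>K \<alpha> \<beta> \<theta> \<nu>. mu_dichotomic N \<mu> \<Psi> P K \<alpha> \<beta> \<theta> \<nu>"
proof -
  obtain K \<alpha> \<beta> \<theta> \<nu> where "K \<ge> 1" "\<alpha> < 0" "\<beta> > 0" "\<alpha> + \<theta> < 0" "\<beta> - \<nu> > 0"
    and "\<And>t s. s \<le> t \<Longrightarrow>
      op_norm N (\<Psi> t s ** P s) \<le> K * (\<mu> t / \<mu> s) powr \<alpha> * \<mu> s powr (sgn s * \<theta>)"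
    and "\<And>t s. t \<le> s \<Longrightarrow>
      op_norm N (\<Psi> t s ** (mat 1 - P s)) \<le> K * (\<mu> t / \<mu> s) powr \<beta> * \<mu> s powr (sgn s * \<nu>)"
    using assms(5) unfolding mu_dichotomy_def by blast
  moreover have "\<And>t. P t ** P t = P t" and "\<And>t s. P t ** \<Psi> t s = \<Psi> t s ** P s"
    using assms(5) by (simp_all add: mu_dichotomy_def)
  ultimately have "mu_dichotomic N \<mu> \<Psi> P K \<alpha> \<beta> \<theta> \<nu>"
    using assms(1-4) by unfold_locales auto
  then show ?thesis by blast
qed

theorem mainTheorem5:
  fixes N :: "real^'n \<Rightarrow> real"
    and A :: "real \<Rightarrow> real^'n^'n"
    and \<Phi> \<Psi> :: "real \<Rightarrow> real \<Rightarrow> real^'n^'n"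
    and P :: "real \<Rightarrow> real^'n^'n"
    and \<mu> :: "real \<Rightarrow> real" and \<gamma> :: real
  assumes "is_norm N"
    and "continuous_on UNIV A"
    and "evolution_operator A \<Phi>"
    and "diff_growth_rate \<mu>"
    and "evolution_operator (\<lambda>t. A t - (\<gamma> * deriv \<mu> t / \<mu> t) *\<^sub>R mat 1) \<Psi>"
    and "mu_dichotomy N \<mu> \<Psi> P"
  shows "U_set N \<mu> \<Phi> \<gamma> = {(s, \<xi>). \<xi> \<in> range (\<lambda>x. P s *v x)}
     \<and> V_set N \<mu> \<Phi> \<gamma> = {(s, \<xi>). P s *v \<xi> = 0}
     \<and> fib_dsum (U_set N \<mu> \<Phi> \<gamma>) (V_set N \<mu> \<Phi> \<gamma>) = UNIV"
proof -
  note N = assms(1) and cA = assms(2) and E = assms(3) and E' = assms(5)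
  have growth: "growth_rate \<mu>" and pos: "\<And>t. \<mu> t > 0"
    and \<mu>': "\<And>t. (\<mu> has_real_derivative deriv \<mu> t) (at t)"
    using assms(4)
    by (simp_all add: diff_growth_rate_def growth_rate_def DERIV_deriv_iff_real_differentiable)
  have nonzero: "\<mu> t powr \<gamma> \<noteq> 0" for t
    using pos[of t] by simp
  have \<Psi>: "\<Psi> t s = (\<mu> s powr \<gamma> / \<mu> t powr \<gamma>) *\<^sub>R \<Phi> t s" for t s
    using pos \<mu>' by (intro evolution_operator_rescale[OF cA E nonzero _ E'] has_real_derivative_powr_log_deriv)
  have "\<Psi> t s = \<Psi> t r ** \<Psi> r s" for t r s
    by (intro rescaled_cocycle[OF \<Psi> nonzero] evolution_operator_cocycle[OF cA E])
  moreover have "\<Psi> s s = mat 1" for s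
    using E' by (simp add: evolution_operator_def)
  ultimately obtain K \<alpha> \<beta> \<theta> \<nu> where "mu_dichotomic N \<mu> \<Psi> P K \<alpha> \<beta> \<theta> \<nu>"
    using mu_dichotomy_imp_mu_dichotomic[OF N growth _ _ assms(6)] by blast
  then interpret mu_dichotomic N \<mu> \<Psi> P K \<alpha> \<beta> \<theta> \<nu> .
  have U: "U_set N \<mu> \<Phi> \<gamma> = {(s, \<xi>). \<xi> \<in> range (\<lambda>x. P s *v x)}"
    by (simp add: U_set_eq_bounded_forward[OF N pos \<Psi>] bounded_forward_iff)
  have V: "V_set N \<mu> \<Phi> \<gamma> = {(s, \<xi>). P s *v \<xi> = 0}"
    by (simp add: V_set_eq_bounded_backward[OF N pos \<Psi>] bounded_backward_iff)
  show ?thesis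
    using U V fib_dsum_range_kernel[OF idempotent] by simp
qed

end
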